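(* Let $G$ be the Cayley graph of a group of intermediate growth with respect to a finite symmetric generating set. Then $G$ does not satisfy polynomial containment of any degree; that is, for every $d\geq 0$ and every constant $c\geq 1$, $G$ does not satisfy the $\{cn^d\}$-containment property.
   Context: A finitely generated group has intermediate growth if its volume growth $v(n)=|B_n(\mathrm{id})|$ grows faster than any polynomial and slower than any exponential function $e^{\epsilon n}$, $\epsilon>0$. Firefighter process on a graph $G$ with a sequence of integers $\{f(n)\}$: an initial fire occupies a finite set of vertices; at each time $n\geq 1$, at most $f(n)$ vertices that are not on fire become protected, and then the fire spreads to all unprotected neighbours of vertices on fire; once a vertex is protected or on fire it stays so forever. $G$ has the $\{f(n)\}$-containment property if for every finite initial fire there is a protection strategy (protecting at most $f(n)$ vertices at time $n$) such that the set of burning vertices is eventually constant. *)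

theory Defs
  imports "HOL-Algebra.Generated_Groups" Complex_Main
begin

fun word_ball :: "('a, 'b) monoid_scheme \<Rightarrow> 'a set \<Rightarrow> nat \<Rightarrow> 'a set" where
  "word_ball G S 0 = {\<one>\<^bsub>G\<^esub>}"
| "word_ball G S (Suc n) =
     word_ball G S n \<union> {x \<otimes>\<^bsub>G\<^esub> s | x s. x \<in> word_ball G S n \<and> s \<in> S}"

definition growth :: "('a, 'b) monoid_scheme \<Rightarrow> 'a set \<Rightarrow> nat \<Rightarrow> nat" where
  "growth G S n = card (word_ball G S n)"

definition intermediate_growth :: "('a, 'b) monoid_scheme \<Rightarrow> 'a set \<Rightarrow> bool" where
  "intermediate_growth G S \<longleftrightarrow>
     (\<forall>d::real. filterlim (\<lambda>n. real (growth G S n) / real n powr d) at_top sequentially)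
   \<and> (\<forall>\<epsilon>::real. \<epsilon> > 0 \<longrightarrow> (\<lambda>n. real (growth G S n) / exp (\<epsilon> * real n)) \<longlonglongrightarrow> 0)"

definition cayley_adj :: "('a, 'b) monoid_scheme \<Rightarrow> 'a set \<Rightarrow> 'a \<Rightarrow> 'a \<Rightarrow> bool" where
  "cayley_adj G S x y \<longleftrightarrow> x \<in> carrier G \<and> (\<exists>s\<in>S. y = x \<otimes>\<^bsub>G\<^esub> s)"

text \<open>Burning set after time n, for adjacency E, initial fire B0 and protection
  choices W k at times k \<ge> 1 (W 0 is ignored). At time n+1 the vertices
  W 1,...,W (n+1) are protected, then fire spreads to unprotected neighbours.\<close>
fun burning :: "('a \<Rightarrow> 'a \<Rightarrow> bool) \<Rightarrow> 'a set \<Rightarrow> (nat \<Rightarrow> 'a set) \<Rightarrow> nat \<Rightarrow> 'a set" where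
  "burning E B0 W 0 = B0"
| "burning E B0 W (Suc n) =
     burning E B0 W n \<union>
     {y. (\<exists>x\<in>burning E B0 W n. E x y) \<and> y \<notin> (\<Union>k\<in>{1..Suc n}. W k)}"

definition valid_strategy ::
  "'a set \<Rightarrow> ('a \<Rightarrow> 'a \<Rightarrow> bool) \<Rightarrow> (nat \<Rightarrow> real) \<Rightarrow> 'a set \<Rightarrow> (nat \<Rightarrow> 'a set) \<Rightarrow> bool" where
  "valid_strategy V E f B0 W \<longleftrightarrow>
     (\<forall>n\<ge>1. W n \<subseteq> V \<and> finite (W n) \<and> real (card (W n)) \<le> f n
            \<and> W n \<inter> burning E B0 W (n - 1) = {})"

definition containment :: "'a set \<Rightarrow> ('a \<Rightarrow> 'a \<Rightarrow> bool) \<Rightarrow> (nat \<Rightarrow> real) \<Rightarrow> bool" where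
  "containment V E f \<longleftrightarrow>
     (\<forall>B0. finite B0 \<and> B0 \<subseteq> V \<longrightarrow>
        (\<exists>W. valid_strategy V E f B0 W \<and>
             (\<exists>N. \<forall>n\<ge>N. burning E B0 W n = burning E B0 W N)))"

end

theory Submission
  imports Defs
begin

(* Superpolynomial growth gives, through the Coulhon--Saloff-Coste inequality
   |A| \<le> 2k |AS - A| for 2|A| \<le> |B_k|, the isoperimetric profile
   |A|^(D-1) \<le> C_D |AS - A|^D for every D and every large finite A.
   Every vertex of the outer boundary of the burning set is either protected or
   catches fire at the next step, while only O(n^(d+1)) vertices are protected up
   to time n.  Starting from a large enough ball, the burning set therefore stays
   of size at least (n + T)^E for a suitable exponent E, so it never stabilises. *)

lemma power_Suc_add_one_le:
  fixes x :: "'a::linordered_idom"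
  assumes "0 \<le> x"
  shows "(x + 1) ^ Suc F \<le> x ^ Suc F + of_nat (Suc F) * (x + 1) ^ F"
proof (induction F)
  case (Suc F)
  have "(x + 1) ^ Suc (Suc F) \<le> (x + 1) * (x ^ Suc F + of_nat (Suc F) * (x + 1) ^ F)"
    using Suc assms by (simp only: power_Suc[of "x + 1" "Suc F"]) (rule mult_left_mono; simp)
  also have "\<dots> = x ^ Suc (Suc F) + x ^ Suc F + of_nat (Suc F) * (x + 1) ^ Suc F"
    by (simp add: algebra_simps)
  also have "\<dots> \<le> x ^ Suc (Suc F) + of_nat (Suc (Suc F)) * (x + 1) ^ Suc F"
    using power_mono[of x "x + 1" "Suc F"] assms by (simp add: algebra_simps)
  finally show ?case .
qed simp

lemma power_le_of_profile:
  fixes x a b K :: real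
  assumes "1 \<le> x" "0 \<le> K" "0 \<le> b" "x ^ Suc F \<le> a"
    and "2 * 4 ^ (2 * Suc F) * K ^ (2 * Suc F) \<le> x ^ Suc F"
    and profile: "a ^ (2 * F + 1) \<le> 2 * 4 ^ (2 * Suc F) * b ^ (2 * Suc F)"
  shows "K * x ^ F \<le> b"
proof -
  have "2 * 4 ^ (2 * Suc F) * (K * x ^ F) ^ (2 * Suc F)
      = (2 * 4 ^ (2 * Suc F) * K ^ (2 * Suc F)) * (x ^ F) ^ (2 * Suc F)"
    by (simp add: power_mult_distrib)
  also have "\<dots> \<le> x ^ Suc F * (x ^ F) ^ (2 * Suc F)"
    using assms(1,5) by (intro mult_right_mono) auto
  also have "\<dots> = (x ^ Suc F) ^ (2 * F + 1)"
    by (simp add: power_mult[symmetric] power_add[symmetric] algebra_simps)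
  also have "\<dots> \<le> a ^ (2 * F + 1)"
    using assms(1,4) by (intro power_mono) auto
  also have "\<dots> \<le> 2 * 4 ^ (2 * Suc F) * b ^ (2 * Suc F)"
    by (rule profile)
  finally have "(K * x ^ F) ^ Suc (2 * F + 1) \<le> b ^ Suc (2 * F + 1)"
    by simp
  then show ?thesis
    using assms(3) by (rule power_le_imp_le_base)
qed

lemma power_Suc_lower_bound_step:
  fixes x a a' b q c K :: real
  assumes "1 \<le> x" "x ^ Suc F \<le> a" "q \<le> c * x ^ F" "K * x ^ F \<le> b"
    and "real (Suc F) * 2 ^ F + c \<le> K" and "a + b \<le> a' + q"
  shows "(x + 1) ^ Suc F \<le> a'"
proof -
  have "(x + 1) ^ Suc F \<le> x ^ Suc F + real (Suc F) * (x + 1) ^ F"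
    using power_Suc_add_one_le[of x F] assms(1) by simp
  also have "\<dots> \<le> x ^ Suc F + real (Suc F) * (2 ^ F * x ^ F)"
    using power_mono[of "x + 1" "2 * x" F] assms(1) by (simp add: power_mult_distrib)
  also have "\<dots> \<le> a + (K - c) * x ^ F"
  proof -
    have "real (Suc F) * 2 ^ F * x ^ F \<le> (K - c) * x ^ F"
      using assms(1,5) by (intro mult_right_mono) auto
    with assms(2) show ?thesis by (simp add: mult.assoc)
  qed
  also have "\<dots> \<le> a'"
    using assms(3,4,6) by (simp add: algebra_simps)
  finally show ?thesis .
qed

lemma word_ball_finite: "finite S \<Longrightarrow> finite (word_ball G S n)"
proof (induction n)
  case (Suc n)
  have "finite {x \<otimes>\<^bsub>G\<^esub> s | x s. x \<in> word_ball G S n \<and> s \<in> S}"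
    by (rule finite_image_set2) (use Suc in auto)
  with Suc show ?case by simp
qed simp

lemma word_ball_subset_carrier:
  assumes "group G" "S \<subseteq> carrier G"
  shows "word_ball G S n \<subseteq> carrier G"
proof -
  interpret group G by fact
  show ?thesis
    by (induction n) (use assms(2) in auto)
qed

lemma word_ball_mono: "m \<le> n \<Longrightarrow> word_ball G S m \<subseteq> word_ball G S n"
  by (induction n) (auto simp: le_Suc_eq)

lemma growth_mono: "finite S \<Longrightarrow> m \<le> n \<Longrightarrow> growth G S m \<le> growth G S n"
  unfolding growth_def by (intro card_mono word_ball_finite word_ball_mono)

lemma intermediate_growth_imp_power_le_growth:
  assumes "intermediate_growth G S"
  obtains r0 where "r0 \<ge> 1" "\<And>r. r \<ge> r0 \<Longrightarrow> r ^ D \<le> growth G S r"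
proof -
  have "filterlim (\<lambda>n. real (growth G S n) / real n powr real D) at_top sequentially"
    using assms unfolding intermediate_growth_def by blast
  then obtain N where N: "\<And>n. n \<ge> N \<Longrightarrow> 1 \<le> real (growth G S n) / real n powr real D"
    by (auto simp: filterlim_at_top eventually_sequentially)
  have "r ^ D \<le> growth G S r" if "r \<ge> max N 1" for r
  proof -
    have "0 < real r" using that by simp
    with N[of r] that have "real r ^ D \<le> real (growth G S r)"
      by (simp add: powr_realpow le_divide_eq)
    then show ?thesis by (simp flip: of_nat_power)
  qed
  then show ?thesis using that[of "max N 1"] by simp
qed

lemma intermediate_growth_unbounded:
  assumes "intermediate_growth G S"
  obtains m where "x \<le> real (growth G S m)"
proof -
  obtain r0 where "\<And>r. r \<ge> r0 \<Longrightarrow> r ^ 1 \<le> growth G S r"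
    using intermediate_growth_imp_power_le_growth[OF assms] by blast
  then have "real (nat \<lceil>x\<rceil>) \<le> real (growth G S (max r0 (nat \<lceil>x\<rceil>)))"
    by (metis max.cobounded1 max.cobounded2 of_nat_le_iff order.trans power_one_right)
  then show ?thesis
    using real_nat_ceiling_ge[of x] that by (meson order.trans)
qed

definition outer_boundary :: "('a, 'b) monoid_scheme \<Rightarrow> 'a set \<Rightarrow> 'a set \<Rightarrow> 'a set" where
  "outer_boundary G S A = {x \<otimes>\<^bsub>G\<^esub> s | x s. x \<in> A \<and> s \<in> S} - A"

lemma outer_boundary_finite: "finite A \<Longrightarrow> finite S \<Longrightarrow> finite (outer_boundary G S A)"
  unfolding outer_boundary_def by (intro finite_Diff finite_image_set2) auto

lemma card_escaping_le:
  fixes G (structure)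
  assumes "group G" "S \<subseteq> carrier G" "finite S" "finite A" "A \<subseteq> carrier G"
    and "g \<in> word_ball G S k"
  shows "card {a\<in>A. a \<otimes> g \<notin> A} \<le> k * card (outer_boundary G S A)"
  using assms(6)
proof (induction k arbitrary: g)
  case 0
  with assms show ?case by (simp add: group.is_monoid monoid.r_one subsetD)
next
  case (Suc k)
  interpret group G by fact
  let ?bd = "outer_boundary G S A"
  show ?case
  proof (cases "g \<in> word_ball G S k")
    case True
    then show ?thesis using Suc.IH[of g] by simp
  next
    case False
    then obtain x s where g: "g = x \<otimes> s" and x: "x \<in> word_ball G S k" and s: "s \<in> S"
      using Suc.prems by auto
    have xs: "x \<in> carrier G" "s \<in> carrier G"
      using x s word_ball_subset_carrier[OF assms(1,2)] assms(2) by auto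
    \<comment> \<open>A point escaping under g = x s escapes under x already, or x carries it into A
      and s then carries it into the outer boundary.\<close>
    define M where "M = {a\<in>A. a \<otimes> x \<in> A \<and> (a \<otimes> x) \<otimes> s \<notin> A}"
    have "card M \<le> card ?bd"
    proof (rule card_inj_on_le)
      show "inj_on (\<lambda>a. (a \<otimes> x) \<otimes> s) M"
        using assms(5) xs by (auto simp: M_def inj_on_def subsetD)
      show "(\<lambda>a. (a \<otimes> x) \<otimes> s) ` M \<subseteq> ?bd"
        using s unfolding M_def outer_boundary_def by blast
    qed (use outer_boundary_finite assms(3,4) in blast)
    moreover have "{a\<in>A. a \<otimes> g \<notin> A} \<subseteq> {a\<in>A. a \<otimes> x \<notin> A} \<union> M"
      using g xs assms(5) by (auto simp: M_def m_assoc)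
    then have "card {a\<in>A. a \<otimes> g \<notin> A} \<le> card {a\<in>A. a \<otimes> x \<notin> A} + card M"
      by (intro order.trans[OF card_mono card_Un_le]) (use assms(4) in \<open>auto simp: M_def\<close>)
    ultimately show ?thesis using Suc.IH[OF x] by simp
  qed
qed

lemma card_escaping_sum_ge:
  fixes G (structure)
  assumes "group G" "finite A" "A \<subseteq> carrier G" "finite B" "B \<subseteq> carrier G"
  shows "card A * (card B - card A) \<le> (\<Sum>g\<in>B. card {a\<in>A. a \<otimes> g \<notin> A})"
proof -
  interpret group G by fact
  have "card B - card A \<le> card {g\<in>B. a \<otimes> g \<notin> A}" if a: "a \<in> A" for a
  proof -
    have "card {g\<in>B. a \<otimes> g \<in> A} \<le> card A"
      by (rule card_inj_on_le[where f = "(\<otimes>) a"])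
        (use a assms in \<open>auto simp: inj_on_def subsetD\<close>)
    moreover have "card B = card {g\<in>B. a \<otimes> g \<in> A} + card {g\<in>B. a \<otimes> g \<notin> A}"
      using card_Int_Diff[OF assms(4), of "{g. a \<otimes> g \<in> A}"]
      by (simp add: Int_def set_diff_eq)
    ultimately show ?thesis by linarith
  qed
  then have "card A * (card B - card A) \<le> (\<Sum>a\<in>A. card {g\<in>B. a \<otimes> g \<notin> A})"
    using sum_mono[of A "\<lambda>_. card B - card A"] by simp
  also have "\<dots> = (\<Sum>a\<in>A. \<Sum>g\<in>B. of_bool (a \<otimes> g \<notin> A))"
    using assms(4) by (simp add: Int_def)
  also have "\<dots> = (\<Sum>g\<in>B. \<Sum>a\<in>A. of_bool (a \<otimes> g \<notin> A))"
    by (rule sum.swap)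
  also have "\<dots> = (\<Sum>g\<in>B. card {a\<in>A. a \<otimes> g \<notin> A})"
    using assms(2) by (simp add: Int_def)
  finally show ?thesis .
qed

(* Coulhon--Saloff-Coste: double count the pairs (a, g) \<in> A \<times> B_k with a g \<notin> A. *)

lemma isoperimetric_inequality:
  fixes G (structure)
  assumes "group G" "S \<subseteq> carrier G" "finite S" "finite A" "A \<subseteq> carrier G"
    and ball: "2 * card A \<le> growth G S k"
  shows "card A \<le> 2 * k * card (outer_boundary G S A)"
proof -
  define B where "B = word_ball G S k"
  have B: "finite B" "B \<subseteq> carrier G"
    using word_ball_finite[OF assms(3)] word_ball_subset_carrier[OF assms(1,2)] by (auto simp: B_def)
  have "card B \<le> 2 * (card B - card A)"
    using ball by (simp add: B_def growth_def)
  then have "card A * card B \<le> 2 * (card A * (card B - card A))"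
    using mult_le_mono2[of _ _ "card A"] by (simp add: ac_simps)
  also have "card A * (card B - card A) \<le> (\<Sum>g\<in>B. card {a\<in>A. a \<otimes> g \<notin> A})"
    using card_escaping_sum_ge[OF assms(1,4,5) B] .
  also have "\<dots> \<le> card B * (k * card (outer_boundary G S A))"
    using sum_mono[of B _ "\<lambda>_. k * card (outer_boundary G S A)"]
      card_escaping_le[OF assms(1-5)] by (simp add: B_def)
  finally have "card B * card A \<le> card B * (2 * k * card (outer_boundary G S A))"
    by (simp add: algebra_simps)
  moreover have "card A = 0 \<or> card B > 0"
    using ball by (auto simp: B_def growth_def)
  ultimately show ?thesis by auto
qed

lemma isoperimetric_profile:
  fixes G (structure)
  assumes "group G" "S \<subseteq> carrier G" "finite S" "finite A" "A \<subseteq> carrier G"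
    and growth: "r0 \<ge> 1" "\<And>r. r \<ge> r0 \<Longrightarrow> r ^ Suc D \<le> growth G S r"
    and large: "growth G S r0 < 2 * card A"
  shows "card A ^ D \<le> 2 * 4 ^ Suc D * card (outer_boundary G S A) ^ Suc D"
proof -
  let ?a = "card A" and ?b = "card (outer_boundary G S A)"
  let ?r = "max r0 (2 * ?a)"
  have "2 * ?a \<le> ?r ^ Suc D"
    using self_le_power[of ?r "Suc D"] growth(1) by simp
  also have "\<dots> \<le> growth G S ?r"
    by (rule growth(2)) simp
  finally have "\<exists>k. 2 * ?a \<le> growth G S k" ..
  \<comment> \<open>For the least radius k with 2|A| \<le> |B_k|, its predecessor j has j^(D+1) \<le> |B_j| < 2|A|.\<close>
  then obtain k where k: "2 * ?a \<le> growth G S k" and least: "\<And>i. i < k \<Longrightarrow> growth G S i < 2 * ?a"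
    unfolding exists_least_iff[of "\<lambda>k. 2 * ?a \<le> growth G S k"] by (auto simp: not_le)
  have "r0 < k"
  proof (rule ccontr)
    assume "\<not> r0 < k"
    then have "growth G S k \<le> growth G S r0"
      by (intro growth_mono assms(3)) simp
    with k large show False by simp
  qed
  then obtain j where kj: "k = Suc j" and j: "r0 \<le> j"
    by (auto dest: less_imp_Suc_add)
  have "?a \<le> 2 * k * ?b"
    using isoperimetric_inequality[OF assms(1-5) k] .
  also have "\<dots> \<le> 4 * j * ?b"
    using kj j growth(1) by simp
  finally have "?a ^ Suc D \<le> (4 * j * ?b) ^ Suc D"
    by (rule power_mono) simp
  also have "\<dots> = 4 ^ Suc D * j ^ Suc D * ?b ^ Suc D"
    by (simp only: power_mult_distrib)
  also have "\<dots> \<le> 4 ^ Suc D * (2 * ?a) * ?b ^ Suc D"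
    using growth(2)[OF j] least[of j] kj by (intro mult_right_mono mult_left_mono) auto
  finally have "?a * ?a ^ D \<le> ?a * (2 * 4 ^ Suc D * ?b ^ Suc D)"
    by (simp add: ac_simps)
  moreover have "?a > 0"
    using large by simp
  ultimately show ?thesis by simp
qed

(* Growth of degree 2(F + 1) is what makes the boundary of a set of size x^(F + 1)
   large compared with x^F, the order of the protection rate. *)
lemma card_outer_boundary_ge:
  fixes G (structure) and x K :: real
  assumes "group G" "S \<subseteq> carrier G" "finite S" "finite A" "A \<subseteq> carrier G"
    and growth: "r0 \<ge> 1" "\<And>r. r \<ge> r0 \<Longrightarrow> r ^ (2 * Suc F) \<le> growth G S r"
    and bounds: "0 \<le> K" "1 \<le> x"
      "real (growth G S r0) + 2 * 4 ^ (2 * Suc F) * K ^ (2 * Suc F) \<le> x ^ Suc F"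
    and a: "x ^ Suc F \<le> real (card A)"
  shows "K * x ^ F \<le> real (card (outer_boundary G S A))"
proof -
  let ?a = "card A" and ?b = "card (outer_boundary G S A)"
  have K: "0 \<le> 2 * 4 ^ (2 * Suc F) * K ^ (2 * Suc F)"
    using bounds(1) by simp
  have "real (growth G S r0) < 2 * real ?a"
    using a bounds(3) K one_le_power[OF bounds(2), of "Suc F"] by linarith
  then have large: "growth G S r0 < 2 * ?a"
    by linarith
  have exponent: "Suc (2 * F + 1) = 2 * Suc F"
    by simp
  have "?a ^ (2 * F + 1) \<le> 2 * 4 ^ (2 * Suc F) * ?b ^ (2 * Suc F)"
    by (rule isoperimetric_profile[where D = "2 * F + 1", unfolded exponent,
          OF assms(1-5) growth large])
  then have "real (?a ^ (2 * F + 1)) \<le> real (2 * 4 ^ (2 * Suc F) * ?b ^ (2 * Suc F))"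
    by (simp only: of_nat_le_iff)
  then have "real ?a ^ (2 * F + 1) \<le> 2 * 4 ^ (2 * Suc F) * real ?b ^ (2 * Suc F)"
    by (simp only: of_nat_power of_nat_mult of_nat_numeral)
  then show ?thesis
    using bounds(3) K by (intro power_le_of_profile[OF bounds(2,1) of_nat_0_le_iff a]) auto
qed

lemma burning_finite_subset_carrier:
  fixes G (structure)
  assumes "group G" "S \<subseteq> carrier G" "finite S" "finite B0" "B0 \<subseteq> carrier G"
  shows "finite (burning (cayley_adj G S) B0 W n) \<and> burning (cayley_adj G S) B0 W n \<subseteq> carrier G"
proof (induction n)
  case (Suc n)
  interpret group G by fact
  let ?A = "burning (cayley_adj G S) B0 W n"
  let ?AS = "{x \<otimes> s | x s. x \<in> ?A \<and> s \<in> S}"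
  have "burning (cayley_adj G S) B0 W (Suc n) \<subseteq> ?A \<union> ?AS"
    by (auto simp: cayley_adj_def)
  moreover have "finite ?AS"
    by (rule finite_image_set2) (use Suc assms(3) in auto)
  moreover have "?AS \<subseteq> carrier G"
    using Suc assms(2) by auto
  ultimately show ?case
    using Suc by (meson finite_Un finite_subset le_sup_iff subset_trans)
qed (use assms in simp)

lemma card_outer_boundary_burning_le:
  fixes G (structure) and S B0 :: "'a set" and W :: "nat \<Rightarrow> 'a set"
  defines "A \<equiv> burning (cayley_adj G S) B0 W"
  assumes "finite (A (Suc n))" "A n \<subseteq> carrier G" "finite (\<Union>k\<in>{1..Suc n}. W k)"
  shows "card (A n) + card (outer_boundary G S (A n))
    \<le> card (A (Suc n)) + card (\<Union>k\<in>{1..Suc n}. W k)"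
proof -
  let ?P = "\<Union>k\<in>{1..Suc n}. W k"
  have grow: "A n \<subseteq> A (Suc n)"
    by (auto simp: A_def)
  have "outer_boundary G S (A n) \<subseteq> (A (Suc n) - A n) \<union> ?P"
    using assms(3) by (auto simp: A_def outer_boundary_def cayley_adj_def)
  then have "card (outer_boundary G S (A n)) \<le> card (A (Suc n) - A n) + card ?P"
    by (intro order.trans[OF card_mono card_Un_le]) (use assms(2,4) in auto)
  moreover have "card (A (Suc n) - A n) = card (A (Suc n)) - card (A n)"
    using grow assms(2) by (simp add: card_Diff_subset finite_subset)
  moreover have "card (A n) \<le> card (A (Suc n))"
    using grow assms(2) by (rule card_mono[rotated])
  ultimately show ?thesis by linarith
qed

lemma card_protected_le:
  assumes "valid_strategy V E (\<lambda>n. c * real n powr d) B0 W"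
    and "0 \<le> d" "d \<le> real e" "0 \<le> c"
  shows "finite (\<Union>k\<in>{1..n}. W k) \<and> real (card (\<Union>k\<in>{1..n}. W k)) \<le> c * real n ^ Suc e"
proof
  have W: "finite (W k)" "real (card (W k)) \<le> c * real k powr d" if "k \<ge> 1" for k
    using assms(1) that unfolding valid_strategy_def by auto
  then show "finite (\<Union>k\<in>{1..n}. W k)" by simp
  have "real (card (\<Union>k\<in>{1..n}. W k)) \<le> (\<Sum>k\<in>{1..n}. real (card (W k)))"
    using card_UN_le[of "{1..n}" W] by (simp flip: of_nat_sum)
  also have "\<dots> \<le> (\<Sum>k\<in>{1..n}. c * real n ^ e)"
  proof (rule sum_mono)
    fix k assume k: "k \<in> {1..n}"
    have "real k powr d \<le> real n powr d"
      using k assms(2) by (intro powr_mono2) auto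
    also have "\<dots> \<le> real n powr real e"
      using k assms(3) by (intro powr_mono) auto
    also have "\<dots> = real n ^ e"
      using k by (intro powr_realpow) auto
    finally show "real (card (W k)) \<le> c * real n ^ e"
      using W(2)[of k] k assms(4) by (meson atLeastAtMost_iff mult_left_mono order.trans)
  qed
  also have "\<dots> = c * real n ^ Suc e"
    by simp
  finally show "real (card (\<Union>k\<in>{1..n}. W k)) \<le> c * real n ^ Suc e" .
qed

lemma card_burning_ge_power:
  fixes G (structure) and S B0 :: "'a set" and W :: "nat \<Rightarrow> 'a set" and T c K :: real
  defines "A \<equiv> burning (cayley_adj G S) B0 W"
  assumes G: "group G" "S \<subseteq> carrier G" "finite S"
    and B0: "finite B0" "B0 \<subseteq> carrier G"
    and growth: "r0 \<ge> 1" "\<And>r. r \<ge> r0 \<Longrightarrow> r ^ (2 * Suc F) \<le> growth G S r"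
    and protect: "\<And>n. finite (\<Union>k\<in>{1..n}. W k) \<and> real (card (\<Union>k\<in>{1..n}. W k)) \<le> c * real n ^ F"
    and K: "0 \<le> c" "real (Suc F) * 2 ^ F + c \<le> K"
    and T: "1 \<le> T" "real (growth G S r0) + 2 * 4 ^ (2 * Suc F) * K ^ (2 * Suc F) \<le> T"
    and start: "T ^ Suc F \<le> real (card B0)"
  shows "(real n + T) ^ Suc F \<le> real (card (A n))"
proof (induction n)
  case 0
  with start show ?case by (simp add: A_def)
next
  case (Suc n)
  define x where "x = real n + T"
  let ?P = "\<Union>k\<in>{1..Suc n}. W k"
  let ?a = "card (A n)" and ?b = "card (outer_boundary G S (A n))"
  have x1: "1 \<le> x"
    using T(1) by (simp add: x_def)
  have "T \<le> x"
    by (simp add: x_def)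
  also have "x \<le> x ^ Suc F"
    using x1 by (rule self_le_power) simp
  finally have xT: "T \<le> x ^ Suc F" .
  have A: "finite (A n)" "A n \<subseteq> carrier G" "finite (A (Suc n))"
    using burning_finite_subset_carrier[OF G B0] unfolding A_def by blast+
  have "?a + ?b \<le> card (A (Suc n)) + card ?P"
    unfolding A_def
    by (intro card_outer_boundary_burning_le A[unfolded A_def] conjunct1[OF protect])
  then have step: "real ?a + real ?b \<le> real (card (A (Suc n))) + real (card ?P)"
    by (simp flip: of_nat_add)
  have "real (card ?P) \<le> c * real (Suc n) ^ F"
    using protect by blast
  also have "\<dots> \<le> c * x ^ F"
    using T(1) K(1) by (auto simp: x_def intro!: mult_left_mono power_mono)
  finally have protected: "real (card ?P) \<le> c * x ^ F" .
  have a: "x ^ Suc F \<le> real ?a"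
    using Suc by (simp add: x_def)
  have "0 \<le> real (Suc F) * 2 ^ F"
    by simp
  with K have K0: "0 \<le> K"
    by linarith
  from card_outer_boundary_ge[OF G A(1,2) growth K0 x1 order.trans[OF T(2) xT] a]
  have boundary: "K * x ^ F \<le> real ?b" .
  have "(x + 1) ^ Suc F \<le> real (card (A (Suc n)))"
    by (rule power_Suc_lower_bound_step[OF x1 a protected boundary K(2) step])
  then show ?case by (simp add: x_def add_ac)
qed

theorem corollary2:
  fixes G :: "('a, 'b) monoid_scheme" and S :: "'a set"
  assumes "group G"
    and "finite S" and "S \<subseteq> carrier G"
    and "\<And>s. s \<in> S \<Longrightarrow> inv\<^bsub>G\<^esub> s \<in> S"
    and "generate G S = carrier G"
    and "intermediate_growth G S"
  shows "\<forall>(d::real) (c::real). d \<ge> 0 \<and> c \<ge> 1 \<longrightarrow>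
           \<not> containment (carrier G) (cayley_adj G S) (\<lambda>n. c * real n powr d)"
proof (intro allI impI notI)
  fix d c :: real
  assume dc: "d \<ge> 0 \<and> c \<ge> 1"
    and "containment (carrier G) (cayley_adj G S) (\<lambda>n. c * real n powr d)"
  define F where "F = Suc (nat \<lceil>d\<rceil>)"
  define K where "K = real (Suc F) * 2 ^ F + c"
  obtain r0 where r0: "r0 \<ge> 1" "\<And>r. r \<ge> r0 \<Longrightarrow> r ^ (2 * Suc F) \<le> growth G S r"
    using intermediate_growth_imp_power_le_growth[OF assms(6)] by blast
  define T where "T = real (growth G S r0) + 2 * 4 ^ (2 * Suc F) * K ^ (2 * Suc F) + 1"
  have T: "1 \<le> T" "real (growth G S r0) + 2 * 4 ^ (2 * Suc F) * K ^ (2 * Suc F) \<le> T"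
    using dc by (simp_all add: T_def K_def)
  obtain m where m: "T ^ Suc F \<le> real (growth G S m)"
    using intermediate_growth_unbounded[OF assms(6)] by blast
  let ?B0 = "word_ball G S m" and ?A = "burning (cayley_adj G S) (word_ball G S m)"
  have B0: "finite ?B0" "?B0 \<subseteq> carrier G"
    using word_ball_finite[OF assms(2)] word_ball_subset_carrier[OF assms(1,3)] .
  then obtain W N where W: "valid_strategy (carrier G) (cayley_adj G S) (\<lambda>n. c * real n powr d) ?B0 W"
    and N: "\<And>n. n \<ge> N \<Longrightarrow> ?A W n = ?A W N"
    using \<open>containment _ _ _\<close> unfolding containment_def by blast
  have "finite (\<Union>k\<in>{1..n}. W k) \<and> real (card (\<Union>k\<in>{1..n}. W k)) \<le> c * real n ^ F" for n
    unfolding F_def by (rule card_protected_le[OF W]) (use dc in \<open>auto simp: real_nat_ceiling_ge\<close>)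
  from card_burning_ge_power[OF assms(1,3,2) B0 r0 this _ _ T]
  have bound: "(real n + T) ^ Suc F \<le> real (card (?A W n))" for n
    using dc m by (simp add: K_def growth_def)
  let ?n = "N + card (?A W N)"
  have "real ?n + T \<le> (real ?n + T) ^ Suc F"
    using T(1) by (intro self_le_power) auto
  also have "\<dots> \<le> real (card (?A W N))"
    using bound[of ?n] by (simp only: N[OF le_add1])
  finally show False
    using T(1) by simp
qed

end
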